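(* For any $n\ge 1$, the $h$-polynomial of $(\mathsf{Tr}(n),\preccurlyeq)$ is $$\mathrm{d}_{\mathsf{Tr}(n)}(1,y)=(y+1)^{n-2}\left(y^2+(n+1)y+1\right).$$
   Context: A triword of size $n$ is a word $u=u_1\cdots u_n$ with $u_i\in\{0,1,2\}$, $u_1\ne 2$, and such that $u_i=0$ implies $u_j\neq 1$ for all $j>i$; $\mathsf{Tr}(n)$ is their set, ordered componentwise ($u\preccurlyeq v$ iff $u_i\le v_i$ for all $i$). For a finite poset $\mathcal{P}$, its degree polynomial is $\mathrm{d}_{\mathcal{P}}(x,y)=\sum_{u\in\mathcal{P}}x^{\mathrm{in}(u)}y^{\mathrm{out}(u)}$, where $\mathrm{in}(u)$ (resp. $\mathrm{out}(u)$) is the number of elements covered by (resp. covering) $u$; its $h$-polynomial is $\mathrm{d}_{\mathcal{P}}(1,y)$. (For $n=1$ the formula is read as the rational expression, equal to $y+1$.) *)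

theory Defs
  imports Complex_Main
begin

definition triwords :: "nat \<Rightarrow> nat list set" where
  "triwords n = {u. length u = n \<and> set u \<subseteq> {0,1,2} \<and> (n > 0 \<longrightarrow> u ! 0 \<noteq> 2) \<and>
      (\<forall>i j. i < j \<and> j < n \<and> u ! i = 0 \<longrightarrow> u ! j \<noteq> 1)}"

definition tri_le :: "nat list \<Rightarrow> nat list \<Rightarrow> bool" where
  "tri_le u v \<longleftrightarrow> length u = length v \<and> (\<forall>i < length u. u ! i \<le> v ! i)"

definition covers :: "'a set \<Rightarrow> ('a \<Rightarrow> 'a \<Rightarrow> bool) \<Rightarrow> 'a \<Rightarrow> 'a \<Rightarrow> bool" where
  "covers P le u v \<longleftrightarrow> u \<in> P \<and> v \<in> P \<and> le u v \<and> u \<noteq> v \<and>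
     \<not> (\<exists>w\<in>P. le u w \<and> le w v \<and> w \<noteq> u \<and> w \<noteq> v)"

definition in_deg :: "'a set \<Rightarrow> ('a \<Rightarrow> 'a \<Rightarrow> bool) \<Rightarrow> 'a \<Rightarrow> nat" where
  "in_deg P le u = card {v \<in> P. covers P le v u}"

definition out_deg :: "'a set \<Rightarrow> ('a \<Rightarrow> 'a \<Rightarrow> bool) \<Rightarrow> 'a \<Rightarrow> nat" where
  "out_deg P le u = card {v \<in> P. covers P le u v}"

definition degree_poly :: "'a set \<Rightarrow> ('a \<Rightarrow> 'a \<Rightarrow> bool) \<Rightarrow> 'b::comm_semiring_1 \<Rightarrow> 'b \<Rightarrow> 'b" where
  "degree_poly P le x y = (\<Sum>u\<in>P. x ^ in_deg P le u * y ^ out_deg P le u)"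

definition h_poly :: "'a set \<Rightarrow> ('a \<Rightarrow> 'a \<Rightarrow> bool) \<Rightarrow> 'b::comm_semiring_1 \<Rightarrow> 'b" where
  "h_poly P le y = degree_poly P le 1 y"

end

theory Submission
  imports Defs
begin

(* The upper covers of a triword u are obtained by raising a single letter: a 0 becomes 1 if it
   is the first 0 of u and 2 otherwise, and a 1 becomes 2 unless it is the first letter.  Hence
   out(u) is the number of letters different from 2, minus one if u starts with 1.  A triword of
   size m + 1 is either 0w with w a word over {0,2}, or 1w with w any word over {0,1,2} without a
   1 after a 0; recursion on the first letter of w shows that the two families contribute
   y (1 + y)^m and (1 + y)^m + m y (1 + y)^(m - 1) to the h-polynomial. *)

definition no_one_after_zero :: "nat list \<Rightarrow> bool" where
  "no_one_after_zero w \<longleftrightarrow> (\<forall>i j. i < j \<and> j < length w \<and> w ! i = 0 \<longrightarrow> w ! j \<noteq> 1)"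

lemma no_one_after_zero_Nil [simp]: "no_one_after_zero []"
  by (simp add: no_one_after_zero_def)

lemma no_one_after_zero_Cons [simp]:
  "no_one_after_zero (x # w) \<longleftrightarrow> (x = 0 \<longrightarrow> 1 \<notin> set w) \<and> no_one_after_zero w"
  unfolding no_one_after_zero_def
proof (intro iffI conjI allI impI)
  fix i j assume H: "\<forall>i j. i < j \<and> j < length (x # w) \<and> (x # w) ! i = 0 \<longrightarrow> (x # w) ! j \<noteq> 1"
  show "1 \<notin> set w" if "x = 0"
    using H[rule_format, of 0 "Suc _"] that by (auto simp: in_set_conv_nth)
  show "w ! j \<noteq> 1" if "i < j \<and> j < length w \<and> w ! i = 0"
    using H[rule_format, of "Suc i" "Suc j"] that by simp
next
  fix i j
  assume H: "(x = 0 \<longrightarrow> 1 \<notin> set w) \<and> (\<forall>i j. i < j \<and> j < length w \<and> w ! i = 0 \<longrightarrow> w ! j \<noteq> 1)"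
    and ij: "i < j \<and> j < length (x # w) \<and> (x # w) ! i = 0"
  then obtain j' where j: "j = Suc j'" "j' < length w"
    by (cases j) auto
  show "(x # w) ! j \<noteq> 1"
  proof (cases i)
    case 0
    then show ?thesis using H ij j nth_mem by fastforce
  next
    case (Suc i')
    then show ?thesis using H ij j by auto
  qed
qed

lemma triwords_iff:
  "u \<in> triwords n \<longleftrightarrow>
     length u = n \<and> set u \<subseteq> {0,1,2} \<and> (n > 0 \<longrightarrow> u ! 0 \<noteq> 2) \<and> no_one_after_zero u"
  by (auto simp: triwords_def no_one_after_zero_def)

lemma nth_triwords_le_2:
  assumes "u \<in> triwords n" "k < n"
  shows "u ! k \<le> 2"
proof -
  have "u ! k \<in> set u"
    using assms by (simp add: triwords_def)
  then have "u ! k \<in> {0,1,2}"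
    using assms(1) by (auto simp: triwords_def)
  then show ?thesis by auto
qed

definition raisable :: "nat list \<Rightarrow> nat \<Rightarrow> bool" where
  "raisable u i \<longleftrightarrow> i < length u \<and> (u ! i = 0 \<or> u ! i = 1 \<and> i \<noteq> 0)"

definition raised_letter :: "nat list \<Rightarrow> nat \<Rightarrow> nat" where
  "raised_letter u i = (if u ! i = 0 \<and> (\<forall>j<i. u ! j \<noteq> 0) then 1 else 2)"

definition raise :: "nat list \<Rightarrow> nat \<Rightarrow> nat list" where
  "raise u i = u[i := raised_letter u i]"

lemma length_raise [simp]: "length (raise u i) = length u"
  by (simp add: raise_def)

lemma nth_raise: "i < length u \<Longrightarrow> raise u i ! j = (if j = i then raised_letter u i else u ! j)"
  by (simp add: raise_def nth_list_update)

lemma raised_letter_gt: "raisable u i \<Longrightarrow> u ! i < raised_letter u i"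
  by (auto simp: raisable_def raised_letter_def)

lemma raise_in_triwords:
  assumes u: "u \<in> triwords n" and i: "raisable u i"
  shows "raise u i \<in> triwords n"
proof -
  have len: "length u = n" and i_len: "i < n"
    using u i by (auto simp: triwords_def raisable_def)
  have "raised_letter u i \<in> {0,1,2}"
    by (simp add: raised_letter_def)
  then have "set (raise u i) \<subseteq> {0,1,2}"
    using u set_update_subset_insert[of u i "raised_letter u i"]
    unfolding triwords_def raise_def by blast
  moreover have "raise u i ! 0 \<noteq> 2" if "n > 0"
    using u i that len
    by (cases "i = 0") (auto simp: triwords_def raisable_def raised_letter_def nth_raise)
  moreover have "raise u i ! b \<noteq> 1"
    if "a < b" "b < n" "raise u i ! a = 0" for a b
  proof -
    have "a \<noteq> i" "u ! a = 0"
      using that i_len len by (auto simp: nth_raise raised_letter_def split: if_splits)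
    then show ?thesis
      using u that i_len len by (auto simp: triwords_def nth_raise raised_letter_def)
  qed
  ultimately show ?thesis
    using len by (auto simp: triwords_def)
qed

lemma tri_le_raise: "raisable u i \<Longrightarrow> tri_le u (raise u i)"
  using raised_letter_gt[of u i]
  by (auto simp: tri_le_def raisable_def nth_raise)

lemma raise_neq: "raisable u i \<Longrightarrow> raise u i \<noteq> u"
  using raised_letter_gt[of u i]
  by (metis less_irrefl raisable_def nth_raise)

lemma between_raise:
  assumes w: "w \<in> triwords n" and i: "raisable u i"
    and le: "tri_le u w" "tri_le w (raise u i)"
  shows "w = u \<or> w = raise u i"
proof -
  have len: "length w = length u" and i_len: "i < length u"
    using le i by (auto simp: tri_le_def raisable_def)
  have off_i: "w ! k = u ! k" if "k < length u" "k \<noteq> i" for k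
    using le that i_len by (fastforce simp: tri_le_def nth_raise)
  have "u ! i \<le> w ! i" "w ! i \<le> raised_letter u i"
    using le i_len by (auto simp: tri_le_def nth_raise)
  moreover have False if "u ! i < w ! i" "w ! i < raised_letter u i"
  proof -
    \<comment> \<open>then a 0 is raised to 2, so it is preceded by a 0, which forbids the 1 in w\<close>
    have "w ! i = 1" "\<not> (\<forall>j<i. u ! j \<noteq> 0)"
      using that by (auto simp: raised_letter_def split: if_splits)
    then obtain j where "j < i" "u ! j = 0" "w ! i = 1"
      by blast
    then show False
      using w off_i[of j] i_len len by (auto simp: triwords_def)
  qed
  ultimately consider "w ! i = u ! i" | "w ! i = raised_letter u i"
    by fastforce
  then show ?thesis
  proof cases
    case 1
    then have "w ! k = u ! k" if "k < length u" for k
      using off_i[OF that] by (cases "k = i") auto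
    then have "w = u" using len by (simp add: nth_equalityI)
    then show ?thesis ..
  next
    case 2
    then have "w ! k = raise u i ! k" if "k < length u" for k
      using off_i[OF that] i_len by (cases "k = i") (auto simp: nth_raise)
    then have "w = raise u i" using len by (simp add: nth_equalityI)
    then show ?thesis ..
  qed
qed

lemma covers_raise:
  assumes "u \<in> triwords n" "raisable u i"
  shows "covers (triwords n) tri_le u (raise u i)"
proof -
  have "\<not> (\<exists>w\<in>triwords n. tri_le u w \<and> tri_le w (raise u i) \<and> w \<noteq> u \<and> w \<noteq> raise u i)"
    using between_raise[OF _ assms(2)] by blast
  moreover have "u \<noteq> raise u i"
    using raise_neq[OF assms(2)] by (rule not_sym)
  ultimately show ?thesis
    using assms(1) raise_in_triwords[OF assms] tri_le_raise[OF assms(2)]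
    unfolding covers_def by simp
qed

lemma raise_below:
  assumes u: "u \<in> triwords n" and v: "v \<in> triwords n" and le: "tri_le u v" and neq: "u \<noteq> v"
  obtains i where "raisable u i" "tri_le (raise u i) v"
proof -
  have len: "length u = n" "length v = n"
    using u v by (auto simp: triwords_def)
  have le_nth: "u ! k \<le> v ! k" if "k < n" for k
    using le len that by (auto simp: tri_le_def)
  have ex: "\<exists>k. k < n \<and> u ! k \<noteq> v ! k"
    using neq len nth_equalityI[of u v] by auto
  define i where "i = (LEAST k. k < n \<and> u ! k \<noteq> v ! k)"
  have i_len: "i < n" and "u ! i \<noteq> v ! i"
    using LeastI_ex[OF ex] unfolding i_def by auto
  then have lt: "u ! i < v ! i"
    using le_nth[OF i_len] by simp
  have before: "u ! j = v ! j" if "j < i" for j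
    using not_less_Least[of j "\<lambda>k. k < n \<and> u ! k \<noteq> v ! k"] that i_len unfolding i_def by auto
  have "v ! i \<le> 2" "i = 0 \<longrightarrow> v ! i \<noteq> 2"
    using v i_len by (auto simp: triwords_def nth_triwords_le_2)
  then have raisable: "raisable u i"
    using lt i_len len by (cases "i = 0") (auto simp: raisable_def)
  have "raised_letter u i \<le> v ! i"
  proof (cases "raised_letter u i = 2")
    case True
    \<comment> \<open>a raised letter 2 comes from a 1, or from a 0 preceded by a 0; in the latter case v has no 1 at i\<close>
    have "v ! i \<noteq> 1" if zero: "u ! i = 0"
    proof -
      obtain j where "j < i" "u ! j = 0"
        using True zero by (auto simp: raised_letter_def split: if_splits)
      then show ?thesis
        using v before[of j] i_len len by (auto simp: triwords_def)
    qed
    then show ?thesis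
      using True lt raisable \<open>v ! i \<le> 2\<close> by (auto simp: raisable_def)
  next
    case False
    then show ?thesis
      using lt by (auto simp: raised_letter_def split: if_splits)
  qed
  then have "tri_le (raise u i) v"
    using le_nth len i_len by (auto simp: tri_le_def nth_raise)
  with raisable show ?thesis ..
qed

lemma covers_triwords_iff:
  assumes u: "u \<in> triwords n"
  shows "covers (triwords n) tri_le u v \<longleftrightarrow> (\<exists>i. raisable u i \<and> v = raise u i)"
proof
  assume cov: "covers (triwords n) tri_le u v"
  then have v: "v \<in> triwords n" and "tri_le u v" "u \<noteq> v"
    by (auto simp: covers_def)
  then obtain i where i: "raisable u i" "tri_le (raise u i) v"
    using u raise_below by blast
  then have "raise u i = u \<or> raise u i = v"
    using cov raise_in_triwords[OF u i(1)] tri_le_raise[OF i(1)] i(2) unfolding covers_def by blast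
  then show "\<exists>i. raisable u i \<and> v = raise u i"
    using i raise_neq by auto
qed (auto intro: covers_raise[OF u])

lemma out_deg_triwords:
  assumes u: "u \<in> triwords n"
  shows "out_deg (triwords n) tri_le u = card {i. raisable u i}"
proof -
  have "{v \<in> triwords n. covers (triwords n) tri_le u v} = raise u ` {i. raisable u i}"
    by (auto simp: covers_triwords_iff[OF u] raise_in_triwords[OF u])
  moreover have "inj_on (raise u) {i. raisable u i}"
  proof (rule inj_onI, rule ccontr)
    fix a b
    assume "a \<in> {i. raisable u i}" "b \<in> {i. raisable u i}" "raise u a = raise u b" "a \<noteq> b"
    then have "raised_letter u a = u ! a"
      using nth_raise[of a u a] nth_raise[of b u a] by (simp add: raisable_def)
    then show False
      using raised_letter_gt \<open>a \<in> {i. raisable u i}\<close> by force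
  qed
  ultimately show ?thesis
    by (simp add: out_deg_def card_image)
qed

lemma no_one_after_zero_if_set_subset: "set w \<subseteq> {0,2} \<Longrightarrow> no_one_after_zero w"
  by (induction w) auto

lemma subset_02_iff: "A \<subseteq> {0,2} \<longleftrightarrow> A \<subseteq> {0,1,2} \<and> (1::nat) \<notin> A"
  by auto

definition words_02 :: "nat \<Rightarrow> nat list set" where
  "words_02 m = {w. length w = m \<and> set w \<subseteq> {0,2}}"

definition words_no_one_after_zero :: "nat \<Rightarrow> nat list set" where
  "words_no_one_after_zero m = {w. length w = m \<and> set w \<subseteq> {0,1,2} \<and> no_one_after_zero w}"

lemma finite_words_012: "finite {w :: nat list. length w = m \<and> set w \<subseteq> {0,1,2}}"
  using finite_lists_length_eq[of "{0,1,2::nat}" m] by (simp add: conj_commute)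

lemma finite_words_02: "finite (words_02 m)"
  by (rule finite_subset[OF _ finite_words_012[of m]]) (auto simp: words_02_def)

lemma finite_words_no_one_after_zero: "finite (words_no_one_after_zero m)"
  by (rule finite_subset[OF _ finite_words_012[of m]]) (auto simp: words_no_one_after_zero_def)

lemma words_02_Suc: "words_02 (Suc m) = (#) 0 ` words_02 m \<union> (#) 2 ` words_02 m"
  by (auto simp: words_02_def length_Suc_conv)

lemma words_no_one_after_zero_Suc:
  "words_no_one_after_zero (Suc m) =
     (#) 0 ` words_02 m \<union> (#) 1 ` words_no_one_after_zero m \<union> (#) 2 ` words_no_one_after_zero m"
  by (auto simp: words_02_def words_no_one_after_zero_def length_Suc_conv subset_02_iff
      no_one_after_zero_if_set_subset)

lemma triwords_Suc: "triwords (Suc m) = (#) 0 ` words_02 m \<union> (#) 1 ` words_no_one_after_zero m"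
  by (auto simp: triwords_iff words_02_def words_no_one_after_zero_def length_Suc_conv
      subset_02_iff no_one_after_zero_if_set_subset)

definition non_two_count :: "nat list \<Rightarrow> nat" where
  "non_two_count w = length (filter (\<lambda>c. c \<noteq> 2) w)"

lemma non_two_count_Nil [simp]: "non_two_count [] = 0"
  by (simp add: non_two_count_def)

lemma non_two_count_Cons [simp]:
  "non_two_count (x # w) = (if x = 2 then non_two_count w else Suc (non_two_count w))"
  by (simp add: non_two_count_def)

lemma sum_Cons_image:
  "(\<Sum>u\<in>(#) x ` A. f u) = (\<Sum>w\<in>A. f (x # w))"
  by (simp add: sum.reindex)

lemma sum_words_02:
  "(\<Sum>w\<in>words_02 m. y ^ non_two_count w) = (1 + y :: 'a::comm_semiring_1) ^ m"
proof (induction m)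
  case 0
  have "words_02 0 = {[]}" by (auto simp: words_02_def)
  then show ?case by simp
next
  case (Suc m)
  have "(\<Sum>w\<in>words_02 (Suc m). y ^ non_two_count w) =
        (\<Sum>w\<in>words_02 m. y ^ non_two_count (0 # w)) + (\<Sum>w\<in>words_02 m. y ^ non_two_count (2 # w))"
    unfolding words_02_Suc
    by (subst sum.union_disjoint) (auto simp: finite_words_02 sum_Cons_image)
  also have "\<dots> = (1 + y) * (\<Sum>w\<in>words_02 m. y ^ non_two_count w)"
    by (simp add: sum_distrib_left distrib_right sum.distrib add.commute)
  finally show ?case using Suc.IH by simp
qed

lemma sum_words_no_one_after_zero:
  "(\<Sum>w\<in>words_no_one_after_zero m. y ^ non_two_count w) =
     (1 + y :: 'a::comm_semiring_1) ^ m + of_nat m * y * (1 + y) ^ (m - 1)"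
proof (induction m)
  case 0
  have "words_no_one_after_zero 0 = {[]}" by (auto simp: words_no_one_after_zero_def)
  then show ?case by simp
next
  case (Suc m)
  let ?S = "\<lambda>A. \<Sum>w\<in>A. y ^ non_two_count w"
  have "?S (words_no_one_after_zero (Suc m)) =
        ?S ((#) 0 ` words_02 m) + ?S ((#) 1 ` words_no_one_after_zero m)
          + ?S ((#) 2 ` words_no_one_after_zero m)"
    unfolding words_no_one_after_zero_Suc
    by (subst sum.union_disjoint; auto simp: finite_words_02 finite_words_no_one_after_zero)+
  also have "\<dots> = y * ?S (words_02 m) + (1 + y) * ?S (words_no_one_after_zero m)"
    by (simp add: sum_Cons_image sum_distrib_left distrib_right sum.distrib add_ac)
  also have "\<dots> = (1 + y) ^ Suc m + of_nat (Suc m) * y * (1 + y) ^ m"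
    using Suc.IH by (cases m) (simp_all add: sum_words_02 algebra_simps)
  finally show ?case by simp
qed

lemma card_raisable_Cons:
  assumes "set w \<subseteq> {0,1,2}"
  shows "card {i. raisable (x # w) i} = (if x = 0 then 1 else 0) + non_two_count w"
proof -
  let ?K = "{k. k < length w \<and> w ! k \<noteq> 2}"
  have "{i. raisable (x # w) i} = (if x = 0 then {0} else {}) \<union> Suc ` ?K"
  proof (rule set_eqI)
    fix i
    show "i \<in> {i. raisable (x # w) i} \<longleftrightarrow> i \<in> (if x = 0 then {0} else {}) \<union> Suc ` ?K"
    proof (cases i)
      case (Suc k)
      have "k < length w \<Longrightarrow> w ! k \<in> {0,1,2}"
        using assms nth_mem[of k w] by blast
      then show ?thesis
        using Suc by (auto simp: raisable_def)
    qed (simp add: raisable_def)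
  qed
  moreover have "card ?K = non_two_count w"
    by (simp add: non_two_count_def length_filter_conv_card)
  ultimately show ?thesis
    by (simp add: card_image)
qed

lemma out_deg_triwords_Cons:
  assumes "x # w \<in> triwords n"
  shows "out_deg (triwords n) tri_le (x # w) = (if x = 0 then 1 else 0) + non_two_count w"
proof -
  have "set w \<subseteq> {0,1,2}"
    using assms by (simp add: triwords_iff)
  then show ?thesis
    using out_deg_triwords[OF assms] card_raisable_Cons by simp
qed

lemma h_poly_triwords_Suc:
  "h_poly (triwords (Suc m)) tri_le y =
     y * (1 + y) ^ m + (1 + y) ^ m + of_nat m * y * (1 + y :: 'a::comm_semiring_1) ^ (m - 1)"
proof -
  let ?out = "out_deg (triwords (Suc m)) tri_le"
  have "h_poly (triwords (Suc m)) tri_le y = (\<Sum>u\<in>triwords (Suc m). y ^ ?out u)"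
    by (simp add: h_poly_def degree_poly_def)
  also have "\<dots> = (\<Sum>w\<in>words_02 m. y ^ ?out (0 # w)) + (\<Sum>w\<in>words_no_one_after_zero m. y ^ ?out (1 # w))"
    unfolding triwords_Suc
    by (subst sum.union_disjoint)
      (auto simp: finite_words_02 finite_words_no_one_after_zero sum_Cons_image)
  also have "\<dots> = y * (\<Sum>w\<in>words_02 m. y ^ non_two_count w)
                  + (\<Sum>w\<in>words_no_one_after_zero m. y ^ non_two_count w)"
    using out_deg_triwords_Cons[of 0 _ "Suc m"] out_deg_triwords_Cons[of 1 _ "Suc m"]
    by (simp add: sum_distrib_left triwords_Suc cong: sum.cong)
  finally show ?thesis
    by (simp add: sum_words_02 sum_words_no_one_after_zero add.assoc)
qed

theorem proposition3p3:
  fixes n :: nat and y :: real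
  assumes "n \<ge> 1"
  shows "h_poly (triwords n) tri_le y =
           (if n = 1 then y + 1 else (y + 1) ^ (n - 2) * (y\<^sup>2 + (real n + 1) * y + 1))"
proof -
  obtain m where n: "n = Suc m"
    using assms by (cases n) auto
  show ?thesis
  proof (cases m)
    case 0
    then show ?thesis using n by (simp add: h_poly_triwords_Suc)
  next
    case (Suc k)
    then show ?thesis
      using n by (simp add: h_poly_triwords_Suc power2_eq_square algebra_simps)
  qed
qed

end
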